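(* Let $a,b$ be integers with $0<b<a$, let $S=\langle a,a+1,\ldots,a+b\rangle$ with conductor $c$, and let $m\ge 2c-1$. Let $M$ be an ordered $(S,m,r)$-amenable subset of $S$ whose shadow has $t$ elements, and let $N$ be another $(S,m,r)$-amenable subset of $S$ whose shadow is an interval of integers containing $m$. Then the shadow of $N$ has at least $t$ elements.
   Context: For $x\in S$, $\mathrm D(x)=\{\alpha\in S\mid x-\alpha\in S\}$. A set $M=\{m_1<\cdots<m_r\}\subseteq S$ with $2c-1\le m=m_1$ is $(S,m,r)$-amenable if $\mathrm D(m_i)\cap[m,\infty)\subseteq M$ for all $i$. The ground is $\{m,m+1,\ldots,m+a+b-1\}$, and the shadow of $M$ is $M\cap\{m,\ldots,m+a+b-1\}$. For a finite $M\subseteq S\cap[m,\infty)$, let $J$ be the set of $j\in\{0,\ldots,a-1\}$ such that $x-(m+b)=qa+j$ for some $x\in M$ and some integer $q\ge 0$; if $J\neq\emptyset$ let $j_0=\max J$ and let the wagon of $M$ be $W=\{x\in M\mid x-(m+b)=qa+j_0\text{ for some integer }q\}$. An element $P\in M$ is the pivot of $M$ if either $P<m+b$ and $P=\max M$, or $P=\max W$. An $(S,m,r)$-amenable set $M$ with pivot $P$ is ordered amenable if (i) its shadow is $\{m,m+1,\ldots,m+t\}$ for some integer $0\le t<a+b-1$, and (ii) whenever $s\in S\setminus M$ is such that $M\cup\{s\}$ is $(S,m,r+1)$-amenable with the same shadow as $M$, we have $s=P+a$. *)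

theory Defs
  imports Main
begin

definition gen_semigroup :: "nat set \<Rightarrow> nat set" where
  "gen_semigroup G = {n. \<exists>f :: nat \<Rightarrow> nat. finite {g. f g \<noteq> 0} \<and> {g. f g \<noteq> 0} \<subseteq> G
                          \<and> n = (\<Sum>g\<in>{g. f g \<noteq> 0}. f g * g)}"

definition S_ab :: "nat \<Rightarrow> nat \<Rightarrow> nat set" where
  "S_ab a b = gen_semigroup {a..a+b}"

definition conductor :: "nat set \<Rightarrow> nat" where
  "conductor S = (LEAST c. \<forall>n\<ge>c. n \<in> S)"

definition Dset :: "nat set \<Rightarrow> nat \<Rightarrow> nat set" where
  "Dset S x = {\<alpha> \<in> S. \<alpha> \<le> x \<and> x - \<alpha> \<in> S}"

definition amenable :: "nat set \<Rightarrow> nat \<Rightarrow> nat \<Rightarrow> nat set \<Rightarrow> bool" where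
  "amenable S m r M \<longleftrightarrow> finite M \<and> card M = r \<and> M \<subseteq> S \<and> M \<noteq> {} \<and> Min M = m
     \<and> 2 * conductor S - 1 \<le> m
     \<and> (\<forall>x\<in>M. Dset S x \<inter> {m..} \<subseteq> M)"

definition shadow :: "nat \<Rightarrow> nat \<Rightarrow> nat \<Rightarrow> nat set \<Rightarrow> nat set" where
  "shadow a b m M = M \<inter> {m..m + a + b - 1}"

definition Jset :: "nat \<Rightarrow> nat \<Rightarrow> nat \<Rightarrow> nat set \<Rightarrow> nat set" where
  "Jset a b m M = {j. j < a \<and> (\<exists>x\<in>M. \<exists>q::nat. int x - int (m + b) = int q * int a + int j)}"

definition wagon :: "nat \<Rightarrow> nat \<Rightarrow> nat \<Rightarrow> nat set \<Rightarrow> nat set" where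
  "wagon a b m M = {x\<in>M. \<exists>q::int. int x - int (m + b) = q * int a + int (Max (Jset a b m M))}"

definition is_pivot :: "nat \<Rightarrow> nat \<Rightarrow> nat \<Rightarrow> nat set \<Rightarrow> nat \<Rightarrow> bool" where
  "is_pivot a b m M P \<longleftrightarrow> P \<in> M \<and>
     ((P < m + b \<and> P = Max M) \<or> (Jset a b m M \<noteq> {} \<and> P = Max (wagon a b m M)))"

definition ordered_amenable :: "nat \<Rightarrow> nat \<Rightarrow> nat \<Rightarrow> nat \<Rightarrow> nat set \<Rightarrow> bool" where
  "ordered_amenable a b m r M \<longleftrightarrow> amenable (S_ab a b) m r M
     \<and> (\<exists>P. is_pivot a b m M P
        \<and> (\<exists>t::nat. t + 1 < a + b \<and> shadow a b m M = {m..m+t})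
        \<and> (\<forall>s \<in> S_ab a b - M. amenable (S_ab a b) m (r+1) (M \<union> {s})
              \<and> shadow a b m (M \<union> {s}) = shadow a b m M \<longrightarrow> s = P + a))"

end

theory Submission imports Defs begin

text \<open>
  Let \<open>M\<close> have shadow \<open>{m..m+t}\<close> and pivot \<open>P\<close>, and suppose \<open>N\<close> has the shorter
  shadow \<open>{m..h}\<close>, \<open>h < m + t\<close>. If \<open>N\<close> is not contained in \<open>M\<close>, let \<open>y\<close> be the least
  element of \<open>N - M\<close>. It lies beyond the ground, and \<open>M \<union> {y}\<close> is again amenable with
  the same shadow, so orderedness forces \<open>y = P + a\<close>. Hence \<open>y\<close> exceeds the wagon base
  \<open>z = m + b + max J\<close> by a positive multiple of \<open>a\<close>, so \<open>z \<in> D(y)\<close> and therefore \<open>z \<in> N\<close>.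
  But \<open>z\<close> lies in the ground and \<open>m + t \<le> z\<close> because \<open>m + t \<in> M\<close>, contradicting \<open>h < m + t\<close>.
  Thus \<open>N \<subseteq> M\<close>, and as both have \<open>r\<close> elements, \<open>N = M\<close>, which is absurd.
\<close>

lemma lin_comb_mem_S_ab:
  assumes "0 < b"
  shows "i * a + j * (a + 1) \<in> S_ab a b"
proof -
  define f where "f = (\<lambda>g::nat. if g = a then i else if g = a + 1 then j else 0)"
  have supp: "{g. f g \<noteq> 0} \<subseteq> {a, a + 1}" by (auto simp: f_def split: if_splits)
  have "(\<Sum>g\<in>{g. f g \<noteq> 0}. f g * g) = (\<Sum>g\<in>{a, a + 1}. f g * g)"
    by (rule sum.mono_neutral_left) (use supp in auto)
  also have "\<dots> = i * a + j * (a + 1)" by (simp add: f_def)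
  finally show ?thesis
    unfolding S_ab_def gen_semigroup_def using supp assms finite_subset
    by (intro CollectI exI[of _ f]) auto
qed

lemma S_ab_nonzero_ge:
  assumes "n \<in> S_ab a b" "n \<noteq> 0"
  shows "a \<le> n"
proof -
  obtain f where fin: "finite {g. f g \<noteq> 0}" and supp: "{g. f g \<noteq> 0} \<subseteq> {a..a + b}"
    and n: "n = (\<Sum>g\<in>{g. f g \<noteq> 0}. f g * g)"
    using assms(1) unfolding S_ab_def gen_semigroup_def by blast
  obtain g where g: "f g \<noteq> 0" using n assms(2) by fastforce
  have "a \<le> g" using g supp by auto
  also have "\<dots> \<le> f g * g" using g by simp
  also have "\<dots> \<le> n" unfolding n by (rule member_le_sum) (use g fin in auto)
  finally show ?thesis .
qed

lemma S_ab_mem_if_ge_square: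
  assumes "0 < a" "0 < b" "a * a \<le> n"
  shows "n \<in> S_ab a b"
proof -
  have "a \<le> n div a" using assms by (metis div_le_mono div_mult_self1_is_m)
  then have "n mod a \<le> n div a" using assms(1) by (meson mod_less_divisor less_le_trans less_imp_le)
  then have "n = (n div a - n mod a) * a + (n mod a) * (a + 1)"
    by (simp add: algebra_simps diff_mult_distrib)
  then show ?thesis using lin_comb_mem_S_ab[OF assms(2)] by metis
qed

lemma conductor_S_ab:
  assumes "0 < a" "0 < b" "conductor (S_ab a b) \<le> n"
  shows "n \<in> S_ab a b"
proof -
  have "\<forall>n\<ge>a * a. n \<in> S_ab a b" using S_ab_mem_if_ge_square assms(1,2) by blast
  then have "\<forall>n\<ge>conductor (S_ab a b). n \<in> S_ab a b"
    unfolding conductor_def by (rule LeastI)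
  then show ?thesis using assms(3) by blast
qed

lemma conductor_S_ab_pos:
  assumes "1 < a" "0 < b"
  shows "0 < conductor (S_ab a b)"
  using conductor_S_ab[of a b 1] S_ab_nonzero_ge[of 1 a b] assms by fastforce

lemma S_ab_mem_if_ge:
  assumes "1 < a" "0 < b" "2 * conductor (S_ab a b) - 1 \<le> n"
  shows "n \<in> S_ab a b"
  using conductor_S_ab conductor_S_ab_pos assms by simp

lemma amenable_insert_least_new:
  assumes M: "amenable S m r M" and N: "amenable S m r' N"
    and y: "y \<in> N - M" and below: "\<And>z. z \<in> N \<Longrightarrow> z < y \<Longrightarrow> z \<in> M"
  shows "amenable S m (r + 1) (M \<union> {y})"
proof -
  have "m \<le> y" using N y unfolding amenable_def by (metis DiffD1 Min_le)
  moreover have "Dset S y \<inter> {m..} \<subseteq> M \<union> {y}"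
  proof
    fix z assume z: "z \<in> Dset S y \<inter> {m..}"
    then have "z \<in> N" using N y unfolding amenable_def by blast
    moreover have "z \<le> y" using z unfolding Dset_def by simp
    ultimately show "z \<in> M \<union> {y}" using below by fastforce
  qed
  ultimately show ?thesis
    using M N y unfolding amenable_def by (auto simp: min_def)
qed

lemma finite_Jset: "finite (Jset a b m M)"
  unfolding Jset_def by (rule finite_subset[of _ "{..<a}"]) auto

lemma Max_Jset_less:
  assumes "Jset a b m M \<noteq> {}"
  shows "Max (Jset a b m M) < a"
  using Max_in[OF finite_Jset assms] unfolding Jset_def by blast

lemma mod_mem_Jset:
  assumes "0 < a" "x \<in> M" "m + b \<le> x"
  shows "(x - (m + b)) mod a \<in> Jset a b m M"
proof -
  have "int x - int (m + b) = int ((x - (m + b)) div a) * int a + int ((x - (m + b)) mod a)"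
    using assms(3) by (simp flip: of_nat_mult of_nat_add)
  then show ?thesis unfolding Jset_def using assms(1,2) by auto
qed

lemma pivot_eq_wagon_base_add_mult:
  assumes "is_pivot a b m M P" "finite M" "m + b \<le> P"
  obtains q where "P = m + b + Max (Jset a b m M) + q * a"
proof -
  define j\<^sub>0 where "j\<^sub>0 = Max (Jset a b m M)"
  have J: "Jset a b m M \<noteq> {}" and P: "P = Max (wagon a b m M)"
    using assms(1,3) unfolding is_pivot_def by auto
  have "j\<^sub>0 \<in> Jset a b m M" unfolding j\<^sub>0_def using Max_in[OF finite_Jset J] .
  then obtain x q where "x \<in> M" "int x - int (m + b) = int q * int a + int j\<^sub>0"
    unfolding Jset_def by blast
  then have "x \<in> wagon a b m M" unfolding wagon_def j\<^sub>0_def by force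
  moreover have "finite (wagon a b m M)" unfolding wagon_def using assms(2) by simp
  ultimately have "P \<in> wagon a b m M" using P Max_in by blast
  then obtain q' where q': "int P - int (m + b) = q' * int a + int j\<^sub>0"
    unfolding wagon_def j\<^sub>0_def by blast
  have "j\<^sub>0 < a" unfolding j\<^sub>0_def using Max_Jset_less[OF J] .
  then have "0 < (q' + 1) * int a" using q' assms(3) by (simp add: distrib_right)
  then have "0 \<le> q'" by (simp add: zero_less_mult_iff)
  then have "int P = int (m + b + j\<^sub>0 + nat q' * a)" using q' by (simp add: algebra_simps)
  then have "P = m + b + j\<^sub>0 + nat q' * a" by (simp only: of_nat_eq_iff)
  then show ?thesis using that unfolding j\<^sub>0_def by blast
qed

lemma subset_of_ordered_amenable:
  assumes "0 < b" "b < a" "ordered_amenable a b m r M" "amenable (S_ab a b) m r' N"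
    and "shadow a b m N \<subseteq> shadow a b m M" "Max (shadow a b m M) \<notin> N"
  shows "N \<subseteq> M"
proof (rule ccontr)
  let ?S = "S_ab a b"
  obtain P t where M: "amenable ?S m r M" and pivot: "is_pivot a b m M P"
    and t: "t + 1 < a + b" and shadow_M: "shadow a b m M = {m..m + t}"
    and ordered: "\<And>s. s \<in> ?S - M \<Longrightarrow> amenable ?S m (r + 1) (M \<union> {s})
      \<Longrightarrow> shadow a b m (M \<union> {s}) = shadow a b m M \<Longrightarrow> s = P + a"
    using assms(3) unfolding ordered_amenable_def by blast
  have N: "finite N" "N \<subseteq> ?S" "Min N = m" "\<forall>x\<in>N. Dset ?S x \<inter> {m..} \<subseteq> N"
    using assms(4) unfolding amenable_def by auto
  have "finite M" using M unfolding amenable_def by simp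
  assume "\<not> N \<subseteq> M"
  define y where "y = Min (N - M)"
  have y: "y \<in> N - M" unfolding y_def using \<open>\<not> N \<subseteq> M\<close> N(1) by (intro Min_in) auto
  have "\<And>z. z \<in> N \<Longrightarrow> z < y \<Longrightarrow> z \<in> M" unfolding y_def using N(1) by (meson DiffI Min_le finite_Diff leD)
  then have M_y: "amenable ?S m (r + 1) (M \<union> {y})"
    using amenable_insert_least_new[OF M assms(4) y] by blast
  have "m \<le> y" using N(1,3) y by auto
  moreover have "y \<notin> shadow a b m N" using y assms(5) unfolding shadow_def by auto
  ultimately have beyond: "m + a + b \<le> y" using y unfolding shadow_def by auto
  then have "shadow a b m (M \<union> {y}) = shadow a b m M" using assms(1) unfolding shadow_def by auto
  then have "y = P + a" using ordered M_y y N(2) by blast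
  then have "m + b \<le> P" using beyond by simp
  then obtain q where P: "P = m + b + Max (Jset a b m M) + q * a"
    using pivot_eq_wagon_base_add_mult[OF pivot \<open>finite M\<close>] by blast
  define z where "z = m + b + Max (Jset a b m M)"
  have J: "Jset a b m M \<noteq> {}"
    using mod_mem_Jset[of a P M m b] pivot \<open>m + b \<le> P\<close> assms(2) unfolding is_pivot_def by auto
  have "y = z + (q + 1) * a" using P \<open>y = P + a\<close> unfolding z_def by simp
  moreover have "z \<in> ?S"
    using S_ab_mem_if_ge[of a b z] M assms(1,2) unfolding z_def amenable_def by simp
  moreover have "(q + 1) * a \<in> ?S" using lin_comb_mem_S_ab[OF assms(1), of "q + 1" a 0] by simp
  ultimately have "z \<in> Dset ?S y \<inter> {m..}" unfolding Dset_def z_def by auto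
  then have "z \<in> N" using N(4) y by blast
  moreover have "z \<le> m + a + b - 1" using Max_Jset_less[OF J] unfolding z_def by simp
  ultimately have "z \<in> shadow a b m N" unfolding shadow_def z_def by simp
  then have "z \<le> m + t" using assms(5) shadow_M by auto
  moreover have "m + t \<le> z"
  proof (cases "b \<le> t")
    case True
    have "m + t \<in> M" using shadow_M unfolding shadow_def by auto
    then have "t - b \<in> Jset a b m M" using mod_mem_Jset[of a "m + t" M m b] True t by simp
    then have "t - b \<le> Max (Jset a b m M)" by (rule Max_ge[OF finite_Jset])
    then show ?thesis unfolding z_def by simp
  qed (simp add: z_def)
  moreover have "Max (shadow a b m M) = m + t" unfolding shadow_M by (auto intro: Max_eqI)
  ultimately have "Max (shadow a b m M) \<in> N" using \<open>z \<in> N\<close> by simp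
  then show False using assms(6) by contradiction
qed

theorem proposition4p17:
  fixes a b m r t :: nat and M N :: "nat set"
  assumes "0 < b" and "b < a"
    and "2 * conductor (S_ab a b) - 1 \<le> m"
    and "ordered_amenable a b m r M"
    and "card (shadow a b m M) = t"
    and "amenable (S_ab a b) m r N"
    and "\<exists>lo hi. shadow a b m N = {lo..hi}" and "m \<in> shadow a b m N"
  shows "card (shadow a b m N) \<ge> t"
proof (rule ccontr)
  assume short: "\<not> card (shadow a b m N) \<ge> t"
  obtain t' where shadow_M: "shadow a b m M = {m..m + t'}"
    using assms(4) unfolding ordered_amenable_def by blast
  obtain lo hi where lo_hi: "shadow a b m N = {lo..hi}" using assms(7) by blast
  then have "lo \<le> m" "lo \<in> shadow a b m N" using assms(8) by auto
  then have "lo = m" unfolding shadow_def by auto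
  then have shadow_N: "shadow a b m N = {m..hi}" using lo_hi by simp
  then have "hi < m + t'" using short assms(5) shadow_M by simp
  then have "shadow a b m N \<subseteq> shadow a b m M" using shadow_M shadow_N by auto
  moreover have "Max (shadow a b m M) \<notin> N"
  proof -
    have "Max (shadow a b m M) = m + t'" unfolding shadow_M by (auto intro: Max_eqI)
    moreover have "m + t' \<in> shadow a b m M" "m + t' \<notin> shadow a b m N"
      using shadow_M shadow_N \<open>hi < m + t'\<close> by auto
    ultimately show ?thesis unfolding shadow_def by auto
  qed
  ultimately have "N \<subseteq> M" using subset_of_ordered_amenable assms(1,2,4,6) by blast
  moreover have "finite M" "card M = r" "card N = r"
    using assms(4,6) unfolding ordered_amenable_def amenable_def by auto
  ultimately have "N = M" using card_subset_eq by metis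
  then show False using short assms(5) by simp
qed

end
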